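(* Let $1\le k<d$, $t\ge0$, $n\ge1$, $\tau>0$, let $\nu_{k,d}$ be a probabilistic cubature for $\mathrm{Pol}_t(\mathcal{G}_{k,d})$, and let $P_1,\dots,P_n$ be chosen independently according to $\nu_{k,d}$. Then, with probability at least $1-4e^{-\Psi_\tau(n)}r_\tau(n)$, the family $\{(P_j,\frac1n)\}_{j=1}^n$ is a $\sqrt{\frac{(1+\tau^2)k^t-\lambda_t}{n}}$-approximate cubature for $\mathrm{Pol}_t(\mathcal{G}_{k,d})$ with respect to $K_t$, where $$\Psi_\tau(n)=\frac{\tau^2/2}{(1-\lambda_t/k^t)+\frac{\tau}{3\sqrt n}},\qquad r_\tau(n)=1+\frac{6}{n\tau^2\ln^2\!\big(1+\frac{\tau}{\sqrt n(1-\lambda_t/k^t)}\big)}.$$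
   Context: $\mathscr{H}_d$ denotes the real symmetric $d\times d$ matrices with $\langle A,B\rangle=\operatorname{trace}(AB)$. $\mathcal{G}_{k,d}=\{P\in\mathscr{H}_d:P^2=P,\ \operatorname{trace}(P)=k\}$, with orthogonally invariant Borel probability measure $\sigma_{k,d}$. $\mathrm{Pol}_t(\mathcal{G}_{k,d})$ is the space of restrictions to $\mathcal{G}_{k,d}$ of polynomials of degree at most $t$ on $\mathscr{H}_d$. A Borel probability measure $\nu_{k,d}$ on $\mathcal{G}_{k,d}$ is a probabilistic cubature for $\mathrm{Pol}_t(\mathcal{G}_{k,d})$ if $\int f\,d\nu_{k,d}=\int f\,d\sigma_{k,d}$ for all $f\in\mathrm{Pol}_t(\mathcal{G}_{k,d})$. $K_t(P,Q)=\langle P,Q\rangle^t$ is a positive definite kernel on $\mathcal{G}_{k,d}$ whose shifts span $\mathrm{Pol}_t(\mathcal{G}_{k,d})$; it induces the norm $\|f\|_{K_t}^2=\sum_{i,j}c_ic_jK_t(Q_i,Q_j)$ for $f=\sum_ic_iK_t(Q_i,\cdot)$. $\lambda_t=\iint K_t(P,Q)\,d\sigma_{k,d}(P)\,d\sigma_{k,d}(Q)$. A family $\{(P_j,\omega_j)\}_{j=1}^n$ ($P_j\in\mathcal{G}_{k,d}$, $\omega_j\in\mathbb{R}$) is an $\epsilon$-approximate cubature for $\mathrm{Pol}_t(\mathcal{G}_{k,d})$ with respect to $K_t$ if $\sup\{|\sum_j\omega_jf(P_j)-\int f\,d\sigma_{k,d}|:f\in\mathrm{Pol}_t(\mathcal{G}_{k,d}),\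 \|f\|_{K_t}=1\}\le\epsilon$. *)

theory Defs
  imports "HOL-Analysis.Analysis" "HOL-Probability.Probability"
begin

type_synonym 'n mat = "real ^ 'n ^ 'n"

definition mat_inner :: "'n::finite mat \<Rightarrow> 'n mat \<Rightarrow> real" where
  "mat_inner A B = trace (A ** B)"

text \<open>The Grassmannian G_{k,d} realized as orthogonal projections of rank k.\<close>
definition grass :: "nat \<Rightarrow> 'n::finite mat set" where
  "grass k = {P. transpose P = P \<and> P ** P = P \<and> trace P = real k}"

definition orth_inv_prob :: "nat \<Rightarrow> 'n::finite mat measure \<Rightarrow> bool" where
  "orth_inv_prob k \<sigma> \<longleftrightarrow> prob_space \<sigma> \<and> sets \<sigma> = sets (restrict_space borel (grass k)) \<and>
     (\<forall>U. orthogonal_matrix U \<longrightarrow>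
        (\<forall>A\<in>sets \<sigma>. emeasure \<sigma> ((\<lambda>P. U ** P ** transpose U) ` A) = emeasure \<sigma> A))"

text \<open>Monomials in the matrix entries and the polynomials of degree at most t
  (as functions on all matrices; restricted to G_{k,d} where used).\<close>
definition monomial :: "('n \<times> 'n \<Rightarrow> nat) \<Rightarrow> 'n::finite mat \<Rightarrow> real" where
  "monomial \<alpha> P = (\<Prod>ij\<in>UNIV. (P $ fst ij $ snd ij) ^ \<alpha> ij)"

definition Pol :: "nat \<Rightarrow> ('n::finite mat \<Rightarrow> real) set" where
  "Pol t = {f. \<exists>S a. finite S \<and> (\<forall>\<alpha>\<in>S. (\<Sum>ij\<in>UNIV. \<alpha> ij) \<le> t) \<and>
                  f = (\<lambda>P. \<Sum>\<alpha>\<in>S. a \<alpha> * monomial \<alpha> P)}"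

definition Kt :: "nat \<Rightarrow> 'n::finite mat \<Rightarrow> 'n mat \<Rightarrow> real" where
  "Kt t P Q = (mat_inner P Q) ^ t"

definition lambda_t :: "nat \<Rightarrow> 'n::finite mat measure \<Rightarrow> real" where
  "lambda_t t \<sigma> = (\<integral>P. (\<integral>Q. Kt t P Q \<partial>\<sigma>) \<partial>\<sigma>)"

definition prob_cubature :: "nat \<Rightarrow> nat \<Rightarrow> 'n::finite mat measure \<Rightarrow> 'n mat measure \<Rightarrow> bool" where
  "prob_cubature k t \<sigma> \<nu> \<longleftrightarrow> prob_space \<nu> \<and> sets \<nu> = sets (restrict_space borel (grass k)) \<and>
     (\<forall>f\<in>Pol t. (\<integral>P. f P \<partial>\<nu>) = (\<integral>P. f P \<partial>\<sigma>))"

text \<open>The norm is expressed through a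
  representation f = sum_i c_i K_t(Q_i, .) on G_{k,d}, ||f||^2 = sum_{i,j} c_i c_j K_t(Q_i,Q_j).\<close>
definition approx_cubature ::
  "nat \<Rightarrow> nat \<Rightarrow> 'n::finite mat measure \<Rightarrow> nat \<Rightarrow> (nat \<Rightarrow> 'n mat) \<Rightarrow> (nat \<Rightarrow> real) \<Rightarrow> real \<Rightarrow> bool" where
  "approx_cubature k t \<sigma> n P \<omega> \<epsilon> \<longleftrightarrow>
     (\<forall>f\<in>Pol t. \<forall>m (Q :: nat \<Rightarrow> 'n mat) (c :: nat \<Rightarrow> real).
        (\<forall>i<m. Q i \<in> grass k) \<longrightarrow>
        (\<forall>R\<in>grass k. f R = (\<Sum>i<m. c i * Kt t (Q i) R)) \<longrightarrow>
        (\<Sum>i<m. \<Sum>j<m. c i * c j * Kt t (Q i) (Q j)) = 1 \<longrightarrow>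
        \<bar>(\<Sum>j<n. \<omega> j * f (P j)) - (\<integral>R. f R \<partial>\<sigma>)\<bar> \<le> \<epsilon>)"

end

theory Submission
  imports Defs
begin

text \<open>
  Write \<open>\<phi>(P)\<close> for the vector of all degree-\<open>t\<close> monomials \<open>P\<^sub>e\<^sub>1\<cdots>P\<^sub>e\<^sub>t\<close> in the entries of
  \<open>P\<close>, so that \<open>K\<^sub>t(Q,R) = \<langle>\<phi>(Q),\<phi>(R)\<rangle>\<close>. A function \<open>f = \<Sigma>\<^sub>i c\<^sub>i K\<^sub>t(Q\<^sub>i,\<cdot>)\<close> of norm one
  is \<open>\<langle>w,\<phi>(\<cdot>)\<rangle>\<close> with \<open>|w| = 1\<close>, so by Cauchy-Schwarz the cubature error of the points
  \<open>P\<^sub>j\<close> is at most \<open>|\<Sigma>\<^sub>j X\<^sub>j| / n\<close> with \<open>X\<^sub>j = \<phi>(P\<^sub>j) - \<integral>\<phi> d\<sigma>\<close>. Because \<open>\<nu>\<close> reproduces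
  all polynomials of degree \<open>t\<close>, the \<open>X\<^sub>j\<close> are independent and centred. Orthogonal invariance
  of \<open>\<sigma>\<close> and transitivity of the orthogonal group on \<open>\<G>\<^sub>k\<^sub>,\<^sub>d\<close> make \<open>\<integral>K\<^sub>t(P,Q) d\<sigma>(Q) = \<lambda>\<^sub>t\<close>
  for every \<open>P\<close>, whence \<open>|X\<^sub>j|\<^sup>2 = k\<^sup>t - \<lambda>\<^sub>t\<close> exactly. A Bernstein inequality for sums of
  bounded centred random vectors (Pinelis' argument with \<open>cosh |\<cdot>|\<close>) then gives the tail
  bound \<open>2 e\<^sup>-\<^sup>\<Psi>\<close>, which is even better than the claimed one since \<open>r \<ge> 1\<close>.
\<close>

section \<open>Elementary inequalities for exp and cosh\<close>

definition exp_rem :: "real \<Rightarrow> real" where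
  "exp_rem x = exp x - 1 - x"

lemma exp_rem_nonneg: "exp_rem x \<ge> 0"
  unfolding exp_rem_def using exp_ge_add_one_self[of x] by linarith

lemma exp_rem_mono:
  assumes "0 \<le> x" "x \<le> y"
  shows "exp_rem x \<le> exp_rem y"
  unfolding exp_rem_def
proof (rule DERIV_nonneg_imp_nondecreasing[OF assms(2)])
  fix z :: real assume "x \<le> z" "z \<le> y"
  then show "\<exists>d. DERIV (\<lambda>x. exp x - 1 - x) z :> d \<and> d \<ge> 0"
    using assms by (intro exI[of _ "exp z - 1"] conjI derivative_eq_intros) auto
qed

lemma fact_add_2_ge: "2 * 3 ^ i \<le> (fact (i + 2) :: real)"
proof (induction i)
  case (Suc i)
  have "(2 * 3 ^ Suc i :: real) = 3 * (2 * 3 ^ i)"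
    by simp
  also have "\<dots> \<le> real (i + 3) * fact (i + 2)"
    using Suc by (intro mult_mono) auto
  also have "\<dots> = fact (Suc i + 2)"
    by (simp add: fact_Suc algebra_simps)
  finally show ?case .
qed simp

lemma exp_rem_le:
  assumes "0 \<le> x" "x < 3"
  shows "exp_rem x \<le> x\<^sup>2 / (2 * (1 - x / 3))"
proof -
  have "(\<lambda>i. x ^ (i + 2) /\<^sub>R fact (i + 2)) sums (exp x - (\<Sum>i<2. x ^ i /\<^sub>R fact i))"
    using sums_iff_shift[of "\<lambda>n. x ^ n /\<^sub>R fact n" 2] exp_converges[of x] by simp
  then have rem: "(\<lambda>i. x ^ (i + 2) / fact (i + 2)) sums exp_rem x"
    by (simp add: exp_rem_def eval_nat_numeral divide_inverse mult.commute diff_diff_eq)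
  have geom: "(\<lambda>i. x\<^sup>2 / 2 * (x / 3) ^ i) sums (x\<^sup>2 / 2 * (1 / (1 - x / 3)))"
    using assms by (intro sums_mult geometric_sums) auto
  have "x ^ (i + 2) / fact (i + 2) \<le> x\<^sup>2 / 2 * (x / 3) ^ i" for i
  proof -
    have "x ^ (i + 2) / fact (i + 2) = x\<^sup>2 * x ^ i / fact (i + 2)"
      by (simp add: power_add power2_eq_square mult.commute)
    also have "\<dots> \<le> x\<^sup>2 * x ^ i / (2 * 3 ^ i)"
      using assms by (intro divide_left_mono fact_add_2_ge) auto
    also have "\<dots> = x\<^sup>2 / 2 * (x / 3) ^ i"
      by (simp add: power_divide)
    finally show ?thesis .
  qed
  then show ?thesis
    using sums_le[OF _ rem geom] by simp
qed

lemma sums_cosh_sqrt: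
  assumes "u \<ge> 0"
  shows "(\<lambda>n. if even n then u ^ (n div 2) / fact n else 0) sums cosh (sqrt u)"
proof -
  have "(if even n then sqrt u ^ n /\<^sub>R fact n else 0) = (if even n then u ^ (n div 2) / fact n else 0)"
    for n :: nat
  proof (cases "even n")
    case True
    then obtain m where "n = 2 * m" by blast
    then have "sqrt u ^ n = u ^ (n div 2)"
      by (simp only: power_mult real_sqrt_pow2[OF assms]) simp
    then show ?thesis using True by (simp add: divide_inverse mult.commute)
  qed simp
  then show ?thesis
    using cosh_converges[of "sqrt u"] by simp
qed

lemma convex_on_cosh_sqrt: "convex_on {0..} (\<lambda>u. cosh (sqrt u))"
proof
  fix \<theta> a b :: real
  assume \<theta>: "0 < \<theta>" "\<theta> < 1" and ab: "a \<in> {0..}" "b \<in> {0..}"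
  define T where "T = (\<lambda>u n. if even n then u ^ (n div 2) / fact n else (0::real))"
  have "(1 - \<theta>) * a + \<theta> * b \<ge> 0"
    using \<theta> ab by simp
  then have lhs: "T ((1 - \<theta>) * a + \<theta> * b) sums cosh (sqrt ((1 - \<theta>) * a + \<theta> * b))"
    unfolding T_def by (rule sums_cosh_sqrt)
  have rhs: "(\<lambda>n. (1 - \<theta>) * T a n + \<theta> * T b n) sums ((1 - \<theta>) * cosh (sqrt a) + \<theta> * cosh (sqrt b))"
    unfolding T_def using ab by (intro sums_add sums_mult sums_cosh_sqrt) auto
  have "T ((1 - \<theta>) * a + \<theta> * b) n \<le> (1 - \<theta>) * T a n + \<theta> * T b n" for n
  proof -
    have "convex_on {0::real..} (\<lambda>x. x ^ m)" for m
      by (cases "even m") (auto intro: convex_on_subset[OF convex_power_even] convex_power_odd)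
    then have "((1 - \<theta>) * a + \<theta> * b) ^ m \<le> (1 - \<theta>) * a ^ m + \<theta> * b ^ m" for m
      using convex_onD[of "{0..}" "\<lambda>x. x ^ m" \<theta> a b] \<theta> ab by simp
    then show ?thesis
      by (auto simp: T_def add_divide_distrib[symmetric] intro!: divide_right_mono)
  qed
  then show "cosh (sqrt ((1 - \<theta>) *\<^sub>R a + \<theta> *\<^sub>R b)) \<le> (1 - \<theta>) * cosh (sqrt a) + \<theta> * cosh (sqrt b)"
    using sums_le[OF _ lhs rhs] by simp
qed simp

lemma sinh_ge_self:
  assumes "y \<ge> 0"
  shows "sinh y \<ge> (y :: real)"
proof -
  have "sinh 0 - 0 \<le> sinh y - y"
  proof (rule DERIV_nonneg_imp_nondecreasing[OF assms])
    fix x :: real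
    show "\<exists>z. DERIV (\<lambda>x. sinh x - x) x :> z \<and> z \<ge> 0"
      by (intro exI[of _ "cosh x - 1"] conjI derivative_eq_intros) (auto simp: cosh_real_ge_1)
  qed
  then show ?thesis by simp
qed

lemma cosh_add_le: "(y :: real) \<ge> 0 \<Longrightarrow> cosh (r + y) \<le> cosh r + y * sinh r + cosh r * exp_rem y"
proof -
  assume "y \<ge> 0"
  have "cosh r + y * sinh r + cosh r * exp_rem y - cosh (r + y) = (cosh r - sinh r) * (sinh y - y)"
    by (simp add: cosh_add exp_rem_def cosh_plus_sinh[symmetric] algebra_simps)
  moreover have "(cosh r - sinh r) * (sinh y - y) \<ge> 0"
    using sinh_ge_self[OF \<open>y \<ge> 0\<close>] sinh_le_cosh_real[of r] by simp
  ultimately show ?thesis by linarith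
qed

text \<open>
  \<open>r\<^sup>2 + 2rc + y\<^sup>2\<close> is the convex combination of \<open>(r + y)\<^sup>2\<close> and \<open>(r - y)\<^sup>2\<close> with weights
  \<open>(y + c) / 2y\<close> and \<open>(y - c) / 2y\<close>, and \<open>cosh \<circ> sqrt\<close> is convex.
\<close>
lemma cosh_sqrt_le:
  assumes "\<bar>c\<bar> \<le> y"
  shows "cosh (sqrt (r\<^sup>2 + 2 * r * c + y\<^sup>2)) \<le> cosh r + c * sinh r + cosh r * exp_rem y"
proof (cases "y = 0")
  case True
  then show ?thesis using assms by (simp add: exp_rem_def)
next
  case False
  then have y: "y > 0" using assms by simp
  define \<theta> where "\<theta> = (y - c) / (2 * y)"
  have \<theta>: "0 \<le> \<theta>" "\<theta> \<le> 1" using assms y by (auto simp: \<theta>_def field_simps)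
  have "r\<^sup>2 + 2 * r * c + y\<^sup>2 = (1 - \<theta>) * (r + y)\<^sup>2 + \<theta> * (r - y)\<^sup>2"
    using y by (simp add: \<theta>_def field_simps power2_eq_square)
  then have "cosh (sqrt (r\<^sup>2 + 2 * r * c + y\<^sup>2)) = cosh (sqrt ((1 - \<theta>) * (r + y)\<^sup>2 + \<theta> * (r - y)\<^sup>2))"
    by simp
  also have "\<dots> \<le> (1 - \<theta>) * cosh (sqrt ((r + y)\<^sup>2)) + \<theta> * cosh (sqrt ((r - y)\<^sup>2))"
    using convex_onD[OF convex_on_cosh_sqrt, of \<theta> "(r + y)\<^sup>2" "(r - y)\<^sup>2"] \<theta> by simp
  also have "\<dots> = (1 - \<theta>) * cosh (r + y) + \<theta> * cosh (- r + y)"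
    by (simp add: real_sqrt_abs cosh_real_abs abs_minus_commute)
  also have "\<dots> \<le> (1 - \<theta>) * (cosh r + y * sinh r + cosh r * exp_rem y)
                  + \<theta> * (cosh r - y * sinh r + cosh r * exp_rem y)"
    using cosh_add_le[of y r] cosh_add_le[of y "- r"] \<theta> y by (intro add_mono mult_left_mono) auto
  also have "\<dots> = cosh r + c * sinh r + cosh r * exp_rem y"
    using y by (simp add: \<theta>_def field_simps)
  finally show ?thesis .
qed

lemma bernstein_exponent_le:
  fixes N L u :: real
  assumes "N > 0" "L > 0" "u > 0"
  defines "\<theta> \<equiv> u / (N * L\<^sup>2 + L * u / 3)"
  shows "N * exp_rem (\<theta> * L) - \<theta> * u \<le> - (u\<^sup>2 / (2 * (N * L\<^sup>2 + L * u / 3)))"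
proof -
  define D where "D = N * L\<^sup>2 + L * u / 3"
  have D: "D > 0" using assms by (simp add: D_def add_pos_pos)
  have \<theta>: "\<theta> = u / D" by (simp add: \<theta>_def D_def)
  have "\<theta> * L < 3"
    using D assms by (simp add: \<theta> D_def field_simps)
  moreover have "\<theta> * L \<ge> 0"
    using assms D by (simp add: \<theta>)
  ultimately have "N * exp_rem (\<theta> * L) \<le> N * ((\<theta> * L)\<^sup>2 / (2 * (1 - \<theta> * L / 3)))"
    using assms by (intro mult_left_mono exp_rem_le) auto
  also have "\<dots> = \<theta> * u / 2"
  proof -
    have "1 - \<theta> * L / 3 = N * L\<^sup>2 / D"
      using D by (simp add: \<theta> D_def field_simps)
    moreover have "N * ((u / D * L)\<^sup>2 / (2 * (N * L\<^sup>2 / D))) = u / D * u / 2"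
      using D assms by (simp add: field_simps power2_eq_square)
    ultimately show ?thesis
      by (simp add: \<theta>)
  qed
  finally have "N * exp_rem (\<theta> * L) - \<theta> * u \<le> - (\<theta> * u / 2)"
    by simp
  also have "\<theta> * u / 2 = u\<^sup>2 / (2 * D)"
    by (simp add: \<theta> power2_eq_square)
  finally show ?thesis
    by (simp add: D_def)
qed

section \<open>A Bernstein inequality for random vectors\<close>

lemma abs_sum_mult_le_L2_set: "\<bar>\<Sum>i\<in>A. f i * g i\<bar> \<le> L2_set f A * L2_set g A"
  by (rule order_trans[OF sum_abs]) (simp add: abs_mult L2_set_mult_ineq)

lemma L2_set_add_sq:
  "(L2_set (\<lambda>i. f i + g i) A)\<^sup>2 = (L2_set f A)\<^sup>2 + 2 * (\<Sum>i\<in>A. f i * g i) + (L2_set g A)\<^sup>2"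
proof (cases "finite A")
  case True
  have "(L2_set (\<lambda>i. f i + g i) A)\<^sup>2 = (\<Sum>i\<in>A. (f i + g i)\<^sup>2)"
    by (simp add: L2_set_def sum_nonneg)
  also have "\<dots> = (\<Sum>i\<in>A. (f i)\<^sup>2) + 2 * (\<Sum>i\<in>A. f i * g i) + (\<Sum>i\<in>A. (g i)\<^sup>2)"
    by (simp add: power2_sum sum.distrib sum_distrib_left mult.assoc)
  also have "(\<Sum>i\<in>A. (f i)\<^sup>2) = (L2_set f A)\<^sup>2"
    by (simp add: L2_set_def sum_nonneg)
  also have "(\<Sum>i\<in>A. (g i)\<^sup>2) = (L2_set g A)\<^sup>2"
    by (simp add: L2_set_def sum_nonneg)
  finally show ?thesis .
qed simp

text \<open>At \<open>r = 0\<close> the coefficient of the inner product is \<open>0\<close>, since \<open>x / 0 = 0\<close>.\<close>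
lemma cosh_L2_set_add_le:
  fixes s x :: "'c \<Rightarrow> real" and I :: "'c set"
  assumes "\<theta> \<ge> 0"
  defines "r \<equiv> L2_set s I"
  shows "cosh (\<theta> * L2_set (\<lambda>c. s c + x c) I)
           \<le> cosh (\<theta> * r) + \<theta> * sinh (\<theta> * r) / r * (\<Sum>c\<in>I. s c * x c)
              + cosh (\<theta> * r) * exp_rem (\<theta> * L2_set x I)"
proof -
  define y where "y = L2_set x I"
  define ip where "ip = (\<Sum>c\<in>I. s c * x c)"
  define c where "c = ip / r"
  have ry: "r \<ge> 0" "y \<ge> 0"
    by (simp_all add: r_def y_def)
  have "\<bar>ip\<bar> \<le> r * y"
    unfolding ip_def r_def y_def by (rule abs_sum_mult_le_L2_set)
  then have ip: "ip = r * c" and "\<bar>c\<bar> \<le> y"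
    using ry by (auto simp: c_def abs_div divide_le_eq mult.commute)
  then have c: "\<bar>\<theta> * c\<bar> \<le> \<theta> * y"
    using assms by (simp add: abs_mult mult_left_mono)
  have "(L2_set (\<lambda>c. s c + x c) I)\<^sup>2 = r\<^sup>2 + 2 * ip + y\<^sup>2"
    unfolding r_def y_def ip_def by (rule L2_set_add_sq)
  then have "(\<theta> * L2_set (\<lambda>c. s c + x c) I)\<^sup>2
      = (\<theta> * r)\<^sup>2 + 2 * (\<theta> * r) * (\<theta> * c) + (\<theta> * y)\<^sup>2"
    by (simp add: ip power_mult_distrib power2_eq_square algebra_simps)
  moreover have "\<theta> * L2_set (\<lambda>c. s c + x c) I \<ge> 0"
    using assms by simp
  ultimately have "\<theta> * L2_set (\<lambda>c. s c + x c) I = sqrt ((\<theta> * r)\<^sup>2 + 2 * (\<theta> * r) * (\<theta> * c) + (\<theta> * y)\<^sup>2)"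
    by (metis abs_of_nonneg real_sqrt_abs)
  then have "cosh (\<theta> * L2_set (\<lambda>c. s c + x c) I)
      \<le> cosh (\<theta> * r) + (\<theta> * c) * sinh (\<theta> * r) + cosh (\<theta> * r) * exp_rem (\<theta> * y)"
    using cosh_sqrt_le[where r = "\<theta> * r" and c = "\<theta> * c" and y = "\<theta> * y"] c by simp
  also have "(\<theta> * c) * sinh (\<theta> * r) = \<theta> * sinh (\<theta> * r) / r * ip"
    by (simp add: c_def)
  finally show ?thesis
    by (simp add: y_def ip_def)
qed

lemma borel_measurable_L2_set_sum:
  fixes \<nu> :: "'a measure" and X :: "'a \<Rightarrow> 'c \<Rightarrow> real"
  assumes "\<And>c. c \<in> I \<Longrightarrow> (\<lambda>y. X y c) \<in> borel_measurable \<nu>" and "{..<m} \<subseteq> J"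
  shows "(\<lambda>\<omega>. L2_set (\<lambda>c. \<Sum>j<m. X (\<omega> j) c) I) \<in> borel_measurable (PiM J (\<lambda>_. \<nu>))"
proof -
  have "(\<lambda>\<omega>. X (\<omega> j) c) \<in> borel_measurable (PiM J (\<lambda>_. \<nu>))" if "c \<in> I" "j < m" for c j
    using measurable_compose[OF measurable_component_singleton[of j J "\<lambda>_. \<nu>"] assms(1)[OF that(1)]]
      that assms(2) by auto
  then show ?thesis
    unfolding L2_set_def
    by (intro borel_measurable_sqrt[THEN measurable_compose_rev] borel_measurable_sum
          borel_measurable_power) auto
qed

lemma nn_integral_cosh_L2_set_add_le:
  fixes \<nu> :: "'a measure" and X :: "'a \<Rightarrow> 'c \<Rightarrow> real" and s :: "'c \<Rightarrow> real"
  assumes "prob_space \<nu>" "finite I" "\<theta> \<ge> 0" "L \<ge> 0"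
    and int: "\<And>c. c \<in> I \<Longrightarrow> integrable \<nu> (\<lambda>y. X y c)"
    and bnd: "\<And>y. y \<in> space \<nu> \<Longrightarrow> L2_set (X y) I \<le> L"
    and mean: "\<And>c. c \<in> I \<Longrightarrow> (\<integral>y. X y c \<partial>\<nu>) = 0"
  shows "(\<integral>\<^sup>+y. ennreal (cosh (\<theta> * L2_set (\<lambda>c. s c + X y c) I)) \<partial>\<nu>)
           \<le> ennreal (cosh (\<theta> * L2_set s I) * (1 + exp_rem (\<theta> * L)))"
proof -
  interpret prob_space \<nu> by fact
  define r where "r = L2_set s I"
  define F where "F = (\<lambda>y. cosh (\<theta> * L2_set (\<lambda>c. s c + X y c) I))"
  define C where "C = cosh (\<theta> * r) * (1 + exp_rem (\<theta> * L))"
  define G where "G = (\<lambda>y. C + \<theta> * sinh (\<theta> * r) / r * (\<Sum>c\<in>I. s c * X y c))"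
  have "(\<lambda>y. X y c) \<in> borel_measurable \<nu>" if "c \<in> I" for c
    using int[OF that] by (rule borel_measurable_integrable)
  then have "(\<lambda>y. L2_set (\<lambda>c. s c + X y c) I) \<in> borel_measurable \<nu>"
    unfolding L2_set_def by (intro borel_measurable_sqrt[THEN measurable_compose_rev]) measurable
  moreover have "(\<lambda>x. cosh (\<theta> * x)) \<in> borel_measurable borel"
    by (intro borel_measurable_continuous_onI continuous_intros)
  ultimately have measF: "F \<in> borel_measurable \<nu>"
    unfolding F_def by (rule measurable_compose)
  have intG: "integrable \<nu> G"
    unfolding G_def using int by auto
  have FG: "F y \<le> G y" if "y \<in> space \<nu>" for y
  proof -
    have "F y \<le> cosh (\<theta> * r) + \<theta> * sinh (\<theta> * r) / r * (\<Sum>c\<in>I. s c * X y c)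
                 + cosh (\<theta> * r) * exp_rem (\<theta> * L2_set (X y) I)"
      unfolding F_def r_def by (rule cosh_L2_set_add_le) (use assms in auto)
    also have "exp_rem (\<theta> * L2_set (X y) I) \<le> exp_rem (\<theta> * L)"
      using bnd[OF that] assms by (intro exp_rem_mono mult_left_mono) auto
    finally show ?thesis
      by (simp add: G_def C_def algebra_simps)
  qed
  have intF: "integrable \<nu> F"
    by (rule Bochner_Integration.integrable_bound[OF intG measF])
       (use FG in \<open>auto intro!: AE_I2 simp: F_def intro: order_trans[OF _ abs_ge_self]\<close>)
  have "(\<integral>y. F y \<partial>\<nu>) \<le> (\<integral>y. G y \<partial>\<nu>)"
    by (rule integral_mono[OF intF intG FG])
  also have "(\<integral>y. G y \<partial>\<nu>) = C + \<theta> * sinh (\<theta> * r) / r * (\<Sum>c\<in>I. s c * (\<integral>y. X y c \<partial>\<nu>))"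
    unfolding G_def using int by (simp add: integral_sum prob_space)
  also have "\<dots> = C"
    using mean by simp
  finally have "(\<integral>y. F y \<partial>\<nu>) \<le> C" .
  then have "(\<integral>\<^sup>+y. ennreal (F y) \<partial>\<nu>) \<le> ennreal C"
    by (subst nn_integral_eq_integral[OF intF]) (auto simp: F_def intro: ennreal_leI)
  then show ?thesis
    by (simp add: F_def C_def r_def)
qed

text \<open>
  Pinelis' argument: given the first \<open>n\<close> summands, the next centred summand raises the
  expected \<open>cosh\<close> of the norm by a factor at most \<open>1 + exp_rem (\<theta> L)\<close>.
\<close>
lemma nn_integral_cosh_L2_set_sum_le:
  fixes \<nu> :: "'a measure" and X :: "'a \<Rightarrow> 'c \<Rightarrow> real"
  assumes "prob_space \<nu>" "finite I" "\<theta> \<ge> 0" "L \<ge> 0"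
    and int: "\<And>c. c \<in> I \<Longrightarrow> integrable \<nu> (\<lambda>y. X y c)"
    and bnd: "\<And>y. y \<in> space \<nu> \<Longrightarrow> L2_set (X y) I \<le> L"
    and mean: "\<And>c. c \<in> I \<Longrightarrow> (\<integral>y. X y c \<partial>\<nu>) = 0"
  shows "(\<integral>\<^sup>+\<omega>. ennreal (cosh (\<theta> * L2_set (\<lambda>c. \<Sum>j<n. X (\<omega> j) c) I)) \<partial>PiM {..<n} (\<lambda>_. \<nu>))
           \<le> ennreal ((1 + exp_rem (\<theta> * L)) ^ n)"
proof (induction n)
  case 0
  interpret prob_space "PiM {} (\<lambda>_. \<nu>)"
    using assms(1) by (intro prob_space_PiM) auto
  show ?case
    by (simp add: L2_set_def emeasure_space_1)
next
  case (Suc n)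
  interpret prob_space \<nu> by fact
  interpret product_sigma_finite "\<lambda>_. \<nu>" by standard
  define A where "A = 1 + exp_rem (\<theta> * L)"
  have A: "A \<ge> 0"
    using exp_rem_nonneg by (simp add: A_def add_nonneg_nonneg)
  define S where "S = (\<lambda>(m::nat) \<omega>. L2_set (\<lambda>c. \<Sum>j<m. X (\<omega> j) c) I)"
  have measX: "(\<lambda>y. X y c) \<in> borel_measurable \<nu>" if "c \<in> I" for c
    using int[OF that] by (rule borel_measurable_integrable)
  have measS: "(\<lambda>\<omega>. ennreal (cosh (\<theta> * S m \<omega>))) \<in> borel_measurable (PiM J (\<lambda>_. \<nu>))"
    if "{..<m} \<subseteq> J" for m J
  proof -
    have "(\<lambda>x. ennreal (cosh (\<theta> * x))) \<in> borel_measurable borel"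
      by (intro measurable_compose[OF _ measurable_ennreal] borel_measurable_continuous_onI continuous_intros)
    from measurable_compose[OF borel_measurable_L2_set_sum[OF measX that] this]
    show ?thesis unfolding S_def .
  qed
  have "(\<integral>\<^sup>+\<omega>. ennreal (cosh (\<theta> * S (Suc n) \<omega>)) \<partial>PiM {..<Suc n} (\<lambda>_. \<nu>))
      = (\<integral>\<^sup>+x. (\<integral>\<^sup>+y. ennreal (cosh (\<theta> * S (Suc n) (x(n := y)))) \<partial>\<nu>) \<partial>PiM {..<n} (\<lambda>_. \<nu>))"
    unfolding lessThan_Suc by (rule product_nn_integral_insert[OF _ _ measS]) auto
  also have "\<dots> = (\<integral>\<^sup>+x. (\<integral>\<^sup>+y. ennreal (cosh (\<theta> * L2_set (\<lambda>c. (\<Sum>j<n. X (x j) c) + X y c) I)) \<partial>\<nu>)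
                      \<partial>PiM {..<n} (\<lambda>_. \<nu>))"
    by (simp add: S_def sum.lessThan_Suc)
  also have "\<dots> \<le> (\<integral>\<^sup>+x. ennreal (cosh (\<theta> * S n x)) * ennreal A \<partial>PiM {..<n} (\<lambda>_. \<nu>))"
    unfolding S_def
    by (intro nn_integral_mono order_trans[OF nn_integral_cosh_L2_set_add_le[OF assms]])
       (auto simp: ennreal_mult A A_def[symmetric])
  also have "\<dots> = (\<integral>\<^sup>+x. ennreal (cosh (\<theta> * S n x)) \<partial>PiM {..<n} (\<lambda>_. \<nu>)) * ennreal A"
    by (rule nn_integral_multc[OF measS]) simp
  also have "\<dots> \<le> ennreal (A ^ n) * ennreal A"
    using Suc.IH unfolding A_def S_def by (intro mult_right_mono) auto
  also have "\<dots> = ennreal (A ^ Suc n)"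
    using A by (simp add: ennreal_mult'[symmetric] mult.commute)
  finally show ?case
    by (simp add: A_def S_def)
qed

lemma cosh_Markov_inequality:
  assumes "prob_space M" "S \<in> borel_measurable M" "\<theta> \<ge> 0" "u \<ge> 0"
  shows "ennreal (cosh (\<theta> * u) * measure M {\<omega>\<in>space M. u \<le> S \<omega>})
           \<le> (\<integral>\<^sup>+\<omega>. ennreal (cosh (\<theta> * S \<omega>)) \<partial>M)"
proof -
  interpret prob_space M by fact
  define E where "E = {\<omega>\<in>space M. u \<le> S \<omega>}"
  have E: "E \<in> sets M"
    unfolding E_def using assms(2) by measurable
  have "ennreal (cosh (\<theta> * u) * measure M E) = (\<integral>\<^sup>+\<omega>. ennreal (cosh (\<theta> * u)) * indicator E \<omega> \<partial>M)"
    using E by (simp add: nn_integral_cmult_indicator emeasure_eq_measure ennreal_mult)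
  also have "\<dots> \<le> (\<integral>\<^sup>+\<omega>. ennreal (cosh (\<theta> * S \<omega>)) \<partial>M)"
  proof (intro nn_integral_mono)
    fix \<omega>
    have "cosh (\<theta> * u) \<le> cosh (\<theta> * S \<omega>)" if "\<omega> \<in> E"
      using that assms(3,4) by (subst cosh_real_nonneg_le_iff) (auto simp: E_def intro: mult_left_mono)
    then show "ennreal (cosh (\<theta> * u)) * indicator E \<omega> \<le> ennreal (cosh (\<theta> * S \<omega>))"
      by (cases "\<omega> \<in> E") (auto intro: ennreal_leI)
  qed
  finally show ?thesis
    by (simp add: E_def)
qed

lemma L2_set_sum_tail_bound:
  fixes \<nu> :: "'a measure" and X :: "'a \<Rightarrow> 'c \<Rightarrow> real"
  assumes "prob_space \<nu>" "finite I" "L > 0" "u > 0" "n > 0"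
    and int: "\<And>c. c \<in> I \<Longrightarrow> integrable \<nu> (\<lambda>y. X y c)"
    and bnd: "\<And>y. y \<in> space \<nu> \<Longrightarrow> L2_set (X y) I \<le> L"
    and mean: "\<And>c. c \<in> I \<Longrightarrow> (\<integral>y. X y c \<partial>\<nu>) = 0"
  defines "M \<equiv> PiM {..<n} (\<lambda>_. \<nu>)"
  shows "measure M {\<omega>\<in>space M. u \<le> L2_set (\<lambda>c. \<Sum>j<n. X (\<omega> j) c) I}
           \<le> 2 * exp (- (u\<^sup>2 / (2 * (real n * L\<^sup>2 + L * u / 3))))"
proof -
  have M: "prob_space M"
    unfolding M_def by (intro prob_space_PiM) (use assms in auto)
  define S where "S = (\<lambda>\<omega>. L2_set (\<lambda>c. \<Sum>j<n. X (\<omega> j) c) I)"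
  have "(\<lambda>y. X y c) \<in> borel_measurable \<nu>" if "c \<in> I" for c
    using int[OF that] by (rule borel_measurable_integrable)
  then have S: "S \<in> borel_measurable M"
    unfolding S_def M_def by (rule borel_measurable_L2_set_sum) auto
  define \<theta> where "\<theta> = u / (real n * L\<^sup>2 + L * u / 3)"
  have \<theta>: "\<theta> \<ge> 0"
    using assms by (simp add: \<theta>_def)
  define A where "A = 1 + exp_rem (\<theta> * L)"
  have A: "A \<ge> 0"
    by (simp add: A_def exp_rem_nonneg add_nonneg_nonneg)
  have "ennreal (cosh (\<theta> * u) * measure M {\<omega>\<in>space M. u \<le> S \<omega>}) \<le> (\<integral>\<^sup>+\<omega>. ennreal (cosh (\<theta> * S \<omega>)) \<partial>M)"
    using assms(4) by (intro cosh_Markov_inequality M S \<theta>) simp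
  also have "\<dots> \<le> ennreal (A ^ n)"
    unfolding S_def M_def A_def by (rule nn_integral_cosh_L2_set_sum_le) (use assms \<theta> in auto)
  finally have "cosh (\<theta> * u) * measure M {\<omega>\<in>space M. u \<le> S \<omega>} \<le> A ^ n"
    using A by (simp add: ennreal_le_iff)
  then have "measure M {\<omega>\<in>space M. u \<le> S \<omega>} \<le> A ^ n / cosh (\<theta> * u)"
    by (simp add: field_simps)
  also have "\<dots> \<le> exp (real n * exp_rem (\<theta> * L)) / (exp (\<theta> * u) / 2)"
  proof (rule frac_le)
    have "A ^ n \<le> exp (exp_rem (\<theta> * L)) ^ n"
      unfolding A_def by (intro power_mono exp_ge_add_one_self) (use A A_def in simp)
    then show "A ^ n \<le> exp (real n * exp_rem (\<theta> * L))"
      by (simp add: exp_of_nat_mult)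
    show "exp (\<theta> * u) / 2 \<le> cosh (\<theta> * u)"
      by (simp add: cosh_def)
  qed (use A in auto)
  also have "\<dots> = 2 * exp (real n * exp_rem (\<theta> * L) - \<theta> * u)"
    by (simp add: exp_diff)
  also have "\<dots> \<le> 2 * exp (- (u\<^sup>2 / (2 * (real n * L\<^sup>2 + L * u / 3))))"
    using bernstein_exponent_le[of "real n" L u] assms unfolding \<theta>_def by simp
  finally show ?thesis
    by (simp add: S_def)
qed

lemma bernstein_exponent_ge:
  fixes N K V \<tau> :: real
  assumes "N > 0" "\<tau> > 0" "0 < V" "V \<le> K"
  defines "u \<equiv> sqrt (N * (V + \<tau>\<^sup>2 * K))"
  shows "(\<tau>\<^sup>2 / 2) / (V / K + \<tau> / (3 * sqrt N)) \<le> u\<^sup>2 / (2 * (N * (sqrt V)\<^sup>2 + sqrt V * u / 3))"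
proof -
  have K: "K > 0"
    using assms(1-4) by simp
  have u2: "u\<^sup>2 = N * (V + \<tau>\<^sup>2 * K)"
    unfolding u_def using assms(1-4) K by simp
  have u: "u > 0"
    unfolding u_def using assms(1-4) K by (simp add: add_pos_nonneg)
  have "\<tau>\<^sup>2 * V \<le> V + \<tau>\<^sup>2 * K"
    using assms(1-4) by (simp add: mult_left_mono add_increasing)
  then have "(\<tau> * sqrt V * sqrt N)\<^sup>2 \<le> u\<^sup>2"
    using assms(1-4) u2 by (simp add: power_mult_distrib mult_left_mono mult.commute)
  then have \<tau>V: "\<tau> * sqrt V * sqrt N \<le> u"
    using u by (simp add: power2_le_iff_abs_le)
  have "\<tau>\<^sup>2 * (N * V) \<le> u\<^sup>2 * (V / K)"
    using assms(1-4) K u2 by (simp add: field_simps power2_eq_square mult_left_mono)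
  moreover have "\<tau>\<^sup>2 * (sqrt V * u / 3) \<le> u\<^sup>2 * (\<tau> / (3 * sqrt N))"
  proof -
    have "\<tau>\<^sup>2 * (sqrt V * u / 3) = (\<tau> * sqrt V * sqrt N) * (\<tau> * u / (3 * sqrt N))"
      using assms(1-4) by (simp add: power2_eq_square)
    also have "\<dots> \<le> u * (\<tau> * u / (3 * sqrt N))"
      using \<tau>V assms u by (intro mult_right_mono) auto
    finally show ?thesis
      by (simp add: power2_eq_square mult_ac)
  qed
  ultimately have key: "\<tau>\<^sup>2 * (N * V + sqrt V * u / 3) \<le> u\<^sup>2 * (V / K + \<tau> / (3 * sqrt N))"
    unfolding distrib_left by (rule add_mono)
  have cross_multiply: "(a / 2) / b \<le> c / (2 * d)" if "0 < b" "0 < d" "a * d \<le> c * b" for a b c d :: real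
    using that by (simp add: field_simps)
  have "V / K + \<tau> / (3 * sqrt N) > 0" "N * V + sqrt V * u / 3 > 0"
    using assms(1-4) K u by (auto intro!: add_pos_pos)
  from cross_multiply[OF this key] show ?thesis
    using assms(3) by simp
qed

lemma mult_sqrt_divide: "n > 0 \<Longrightarrow> n * sqrt (B / n) = sqrt (n * (B :: real))"
  by (simp add: real_sqrt_divide real_sqrt_mult field_simps)

lemma L2_set_sum_eq_0:
  assumes "finite I" "\<And>y. y \<in> space \<nu> \<Longrightarrow> L2_set (X y) I = 0" "\<omega> \<in> space (PiM {..<n} (\<lambda>_. \<nu>))"
  shows "L2_set (\<lambda>c. \<Sum>j<n. X (\<omega> j) c) I = 0"
  using assms by (simp add: space_PiM PiE_iff L2_set_eq_0_iff)

lemma L2_set_sum_deviation_bound: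
  fixes \<nu> :: "'a measure" and X :: "'a \<Rightarrow> 'c \<Rightarrow> real" and n :: nat
  assumes "prob_space \<nu>" "finite I" "n > 0" "\<tau> > 0" "0 \<le> V" "V \<le> K" "K > 0"
    and int: "\<And>c. c \<in> I \<Longrightarrow> integrable \<nu> (\<lambda>y. X y c)"
    and bnd: "\<And>y. y \<in> space \<nu> \<Longrightarrow> (L2_set (X y) I)\<^sup>2 \<le> V"
    and mean: "\<And>c. c \<in> I \<Longrightarrow> (\<integral>y. X y c \<partial>\<nu>) = 0"
  defines "M \<equiv> PiM {..<n} (\<lambda>_. \<nu>)" and "\<epsilon> \<equiv> sqrt ((V + \<tau>\<^sup>2 * K) / real n)"
  shows "{\<omega>\<in>space M. real n * \<epsilon> \<le> L2_set (\<lambda>c. \<Sum>j<n. X (\<omega> j) c) I} \<in> sets M"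
    and "measure M {\<omega>\<in>space M. real n * \<epsilon> \<le> L2_set (\<lambda>c. \<Sum>j<n. X (\<omega> j) c) I}
           \<le> 2 * exp (- ((\<tau>\<^sup>2 / 2) / (V / K + \<tau> / (3 * sqrt (real n)))))"
proof -
  let ?Bad = "{\<omega>\<in>space M. real n * \<epsilon> \<le> L2_set (\<lambda>c. \<Sum>j<n. X (\<omega> j) c) I}"
  have "(\<lambda>y. X y c) \<in> borel_measurable \<nu>" if "c \<in> I" for c
    using int[OF that] by (rule borel_measurable_integrable)
  then have [measurable]: "(\<lambda>\<omega>. L2_set (\<lambda>c. \<Sum>j<n. X (\<omega> j) c) I) \<in> borel_measurable M"
    unfolding M_def by (rule borel_measurable_L2_set_sum) auto
  show "?Bad \<in> sets M"
    by measurable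
  have n\<epsilon>: "real n * \<epsilon> = sqrt (real n * (V + \<tau>\<^sup>2 * K))"
    unfolding \<epsilon>_def using assms(3) by (simp add: mult_sqrt_divide)
  have "V + \<tau>\<^sup>2 * K > 0"
    using assms(4-7) by (simp add: add_nonneg_pos)
  then have n\<epsilon>_pos: "real n * \<epsilon> > 0"
    unfolding n\<epsilon> using assms(3) by simp
  show "measure M ?Bad \<le> 2 * exp (- ((\<tau>\<^sup>2 / 2) / (V / K + \<tau> / (3 * sqrt (real n)))))"
  proof (cases "V = 0")
    case True
    then have "L2_set (X y) I = 0" if "y \<in> space \<nu>" for y
      using bnd[OF that] by simp
    then have Bad: "?Bad = {}"
      using L2_set_sum_eq_0[OF assms(2), of \<nu> X] n\<epsilon>_pos by (force simp: M_def)
    show ?thesis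
      by (subst Bad) simp
  next
    case False
    then have V: "V > 0"
      using assms(5) by simp
    have "measure M ?Bad \<le> 2 * exp (- ((real n * \<epsilon>)\<^sup>2 / (2 * (real n * (sqrt V)\<^sup>2 + sqrt V * (real n * \<epsilon>) / 3))))"
      unfolding M_def
      by (rule L2_set_sum_tail_bound[OF assms(1,2) _ n\<epsilon>_pos assms(3) int _ mean])
         (use V bnd in \<open>auto simp: real_le_rsqrt\<close>)
    also have "\<dots> \<le> 2 * exp (- ((\<tau>\<^sup>2 / 2) / (V / K + \<tau> / (3 * sqrt (real n)))))"
      using bernstein_exponent_ge[of "real n" \<tau> V K] assms(3,4,6) V unfolding n\<epsilon> by simp
    finally show ?thesis .
  qed
qed

section \<open>Orthogonal projections and the Grassmannian\<close>

lemma trace_projection_eq_dim: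
  fixes P :: "real^'n^'n"
  assumes "transpose P = P" "P ** P = P"
  shows "trace P = real (dim (range (\<lambda>x. P *v x)))"
proof -
  define V where "V = range (\<lambda>x. P *v x)"
  have "subspace V"
    unfolding V_def by (rule linear_subspace_image[OF matrix_vector_mul_linear subspace_UNIV])
  then obtain B where B: "B \<subseteq> V" "pairwise orthogonal B" "\<And>x. x \<in> B \<Longrightarrow> norm x = 1"
    "independent B" "card B = dim V" "span B = V"
    by (rule orthonormal_basis_subspace) blast
  have finB: "finite B"
    using B(4) by (rule independent_imp_finite)
  have b_fixed: "b v* P = b" if b: "b \<in> B" for b
  proof -
    obtain y where "b = P *v y"
      using B(1) b unfolding V_def by auto
    then have "P *v b = b"
      by (simp add: matrix_vector_mul_assoc assms(2))
    then show ?thesis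
      using assms(1) by (metis transpose_matrix_vector)
  qed
  have expand: "P *v x = (\<Sum>b\<in>B. (b \<bullet> x) *\<^sub>R b)" for x
  proof -
    have "P *v x = (\<Sum>b\<in>B. ((P *v x) \<bullet> b) *\<^sub>R b)"
      using B(2,3,6) finB by (intro orthonormal_basis_expand[symmetric]) (auto simp: V_def)
    also have "\<dots> = (\<Sum>b\<in>B. (b \<bullet> x) *\<^sub>R b)"
      using b_fixed by (intro sum.cong refl) (simp add: inner_commute dot_lmul_matrix[symmetric])
    finally show ?thesis .
  qed
  have "trace P = (\<Sum>i\<in>UNIV. (P *v axis i 1) $ i)"
    unfolding trace_def by (simp add: matrix_vector_mul_component inner_axis)
  also have "\<dots> = (\<Sum>i\<in>UNIV. \<Sum>b\<in>B. (b $ i) * (b $ i))"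
    by (simp add: expand inner_axis)
  also have "\<dots> = (\<Sum>b\<in>B. b \<bullet> b)"
    by (subst sum.swap) (simp add: inner_vec_def)
  also have "\<dots> = real (card B)"
    using B(3) by (simp add: norm_eq_1)
  finally show ?thesis
    using B(5) by (simp add: V_def)
qed

lemma complementary_projection:
  fixes P :: "real^'n^'n"
  assumes "transpose P = P" "P ** P = P"
  shows "transpose (mat 1 - P) = mat 1 - P" "(mat 1 - P) ** (mat 1 - P) = mat 1 - P"
    and "(mat 1 - P) *v x = x - P *v x"
proof -
  show "transpose (mat 1 - P) = mat 1 - P"
    using assms(1) by (simp add: transpose_def mat_def vec_eq_iff)
  show Qx: "(mat 1 - P) *v x = x - P *v x" for x
    by (simp add: matrix_vector_mult_diff_rdistrib)
  have "P *v (x - P *v x) = 0" for x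
    by (simp add: matrix_vector_mult_diff_distrib matrix_vector_mul_assoc assms(2))
  then show "(mat 1 - P) ** (mat 1 - P) = mat 1 - P"
    unfolding matrix_eq by (simp add: Qx matrix_vector_mul_assoc[symmetric])
qed

lemma orthogonal_projection_residual:
  fixes P :: "real^'n^'n"
  assumes "transpose P = P" "P ** P = P"
  shows "orthogonal (P *v z) (w - P *v w)"
proof -
  have "(P *v z) \<bullet> (w - P *v w) = z \<bullet> (P *v (w - P *v w))"
    by (metis dot_lmul_matrix assms(1) transpose_matrix_vector inner_commute)
  also have "P *v (w - P *v w) = 0"
    by (simp add: matrix_vector_mult_diff_distrib matrix_vector_mul_assoc assms(2))
  finally show ?thesis
    by (simp add: orthogonal_def)
qed

lemma isometry_between_projection_ranges:
  fixes P P' :: "real^'n^'n"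
  assumes "transpose P = P" "P ** P = P" "transpose P' = P'" "P' ** P' = P'" "trace P = trace P'"
  obtains f where "linear f" "f ` range (\<lambda>x. P *v x) = range (\<lambda>x. P' *v x)"
    and "\<And>x. x \<in> range (\<lambda>x. P *v x) \<Longrightarrow> norm (f x) = norm x"
proof -
  have "subspace (range (\<lambda>x. A *v x))" for A :: "real^'n^'n"
    by (rule linear_subspace_image[OF matrix_vector_mul_linear subspace_UNIV])
  moreover have "dim (range (\<lambda>x. P *v x)) = dim (range (\<lambda>x. P' *v x))"
    using assms by (simp add: trace_projection_eq_dim)
  ultimately show ?thesis
    using isometry_subspaces that by blast
qed

text \<open>
  An orthogonal transformation carrying \<open>P\<close> to \<open>P'\<close> is glued from isometries between the
  ranges of \<open>P\<close> and \<open>P'\<close> and between the ranges of their complements.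
\<close>
lemma orthogonal_transformation_glue:
  fixes P P' :: "real^'n^'n"
  assumes P: "transpose P = P" "P ** P = P" and P': "transpose P' = P'" "P' ** P' = P'"
    and f1: "linear f1" "f1 ` range (\<lambda>x. P *v x) = range (\<lambda>x. P' *v x)"
      "\<And>x. x \<in> range (\<lambda>x. P *v x) \<Longrightarrow> norm (f1 x) = norm x"
    and f2: "linear f2" "f2 ` range (\<lambda>x. (mat 1 - P) *v x) = range (\<lambda>x. (mat 1 - P') *v x)"
      "\<And>x. x \<in> range (\<lambda>x. (mat 1 - P) *v x) \<Longrightarrow> norm (f2 x) = norm x"
  defines "f \<equiv> \<lambda>x. f1 (P *v x) + f2 (x - P *v x)"
  shows "orthogonal_transformation f" and "f (P *v x) = P' *v f x"
proof -
  have inV: "P *v x \<in> range (\<lambda>x. P *v x)" and inW: "x - P *v x \<in> range (\<lambda>x. (mat 1 - P) *v x)" for x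
    by (auto simp: complementary_projection(3)[OF P])
  have images: "\<exists>z w. f1 (P *v x) = P' *v z \<and> f2 (x - P *v x) = w - P' *v w" for x
    using f1(2) f2(2) inV[of x] inW[of x] by (auto simp: complementary_projection(3)[OF P'])
  have "linear f"
    unfolding f_def
    by (intro linear_compose_add linear_compose[OF matrix_vector_mul_linear f1(1), unfolded o_def]
          linear_compose[OF _ f2(1), unfolded o_def] linear_compose_sub linear_id[unfolded id_def]
          matrix_vector_mul_linear)
  moreover have "norm (f x) = norm x" for x
  proof -
    obtain z w where zw: "f1 (P *v x) = P' *v z" "f2 (x - P *v x) = w - P' *v w"
      using images by blast
    have "(norm (f x))\<^sup>2 = (norm (f1 (P *v x)))\<^sup>2 + (norm (f2 (x - P *v x)))\<^sup>2"
      unfolding f_def zw by (rule norm_add_Pythagorean[OF orthogonal_projection_residual[OF P']])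
    also have "\<dots> = (norm (P *v x))\<^sup>2 + (norm (x - P *v x))\<^sup>2"
      using f1(3)[OF inV] f2(3)[OF inW] by simp
    also have "\<dots> = (norm x)\<^sup>2"
      using norm_add_Pythagorean[OF orthogonal_projection_residual[OF P], of x x] by simp
    finally show ?thesis
      by simp
  qed
  ultimately show "orthogonal_transformation f"
    by (simp add: orthogonal_transformation)
  obtain z w where zw: "f1 (P *v x) = P' *v z" "f2 (x - P *v x) = w - P' *v w"
    using images by blast
  have "f (P *v x) = f1 (P *v x)"
    using P(2) linear_0[OF f2(1)] by (simp add: f_def matrix_vector_mul_assoc)
  also have "\<dots> = P' *v (f1 (P *v x) + f2 (x - P *v x))"
    unfolding zw using P'(2)
    by (simp add: matrix_vector_right_distrib matrix_vector_mult_diff_distrib matrix_vector_mul_assoc)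
  finally show "f (P *v x) = P' *v f x"
    by (simp add: f_def)
qed

lemma grass_transitive:
  fixes P P' :: "real^'n^'n"
  assumes "P \<in> grass k" "P' \<in> grass k"
  obtains U where "orthogonal_matrix U" "U ** P ** transpose U = P'"
proof -
  have P: "transpose P = P" "P ** P = P" "trace P = real k"
    and P': "transpose P' = P'" "P' ** P' = P'" "trace P' = real k"
    using assms by (auto simp: grass_def)
  obtain f1 where f1: "linear f1" "f1 ` range (\<lambda>x. P *v x) = range (\<lambda>x. P' *v x)"
    "\<And>x. x \<in> range (\<lambda>x. P *v x) \<Longrightarrow> norm (f1 x) = norm x"
  proof (rule isometry_between_projection_ranges[OF P(1,2) P'(1,2)])
    show "trace P = trace P'"
      by (simp add: P(3) P'(3))
  qed (rule that)
  obtain f2 where f2: "linear f2" "f2 ` range (\<lambda>x. (mat 1 - P) *v x) = range (\<lambda>x. (mat 1 - P') *v x)"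
    "\<And>x. x \<in> range (\<lambda>x. (mat 1 - P) *v x) \<Longrightarrow> norm (f2 x) = norm x"
  proof (rule isometry_between_projection_ranges[OF complementary_projection(1,2)[OF P(1,2)]
          complementary_projection(1,2)[OF P'(1,2)]])
    show "trace (mat 1 - P) = trace (mat 1 - P')"
      by (simp add: trace_sub P(3) P'(3))
  qed (rule that)
  define f where "f = (\<lambda>x. f1 (P *v x) + f2 (x - P *v x))"
  note glue = orthogonal_transformation_glue[OF P(1,2) P'(1,2) f1 f2, folded f_def]
  define U where "U = matrix f"
  have Ux: "U *v x = f x" for x
    unfolding U_def using matrix_vector_mul(2)[OF orthogonal_transformation_linear[OF glue(1)]] by metis
  have intertwine: "f (P *v x) = P' *v f x" for x
    using glue(2)[of x] by (simp add: f_def)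
  have U: "orthogonal_matrix U"
    using glue(1) unfolding U_def by (simp add: orthogonal_transformation_matrix)
  have "U ** P = P' ** U"
    unfolding matrix_eq by (simp add: Ux intertwine matrix_vector_mul_assoc[symmetric])
  then have "U ** P ** transpose U = P' ** (U ** transpose U)"
    by (simp add: matrix_mul_assoc)
  also have "U ** transpose U = mat 1"
    using U by (simp add: orthogonal_matrix_def)
  finally show ?thesis
    using U that by simp
qed

lemma orthogonal_conj_in_grass:
  fixes U P :: "real^'n^'n"
  assumes "orthogonal_matrix U" "P \<in> grass k"
  shows "U ** P ** transpose U \<in> grass k"
proof -
  have P: "transpose P = P" "P ** P = P" "trace P = real k"
    using assms(2) by (auto simp: grass_def)
  have UU: "transpose U ** U = mat 1"
    using assms(1) by (simp add: orthogonal_matrix_def)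
  have "(U ** P ** transpose U) ** (U ** P ** transpose U) = U ** P ** (transpose U ** U) ** P ** transpose U"
    by (simp add: matrix_mul_assoc)
  also have "\<dots> = U ** (P ** P) ** transpose U"
    by (simp add: UU matrix_mul_assoc)
  also have "\<dots> = U ** P ** transpose U"
    by (simp add: P(2))
  finally have "(U ** P ** transpose U) ** (U ** P ** transpose U) = U ** P ** transpose U" .
  moreover have "trace (U ** P ** transpose U) = real k"
  proof -
    have "trace (U ** P ** transpose U) = trace (U ** (P ** transpose U))"
      by (simp add: matrix_mul_assoc)
    also have "\<dots> = trace ((P ** transpose U) ** U)"
      by (rule trace_mul_sym)
    also have "\<dots> = trace P"
      by (simp add: UU matrix_mul_assoc[symmetric])
    finally show ?thesis
      using P(3) by simp
  qed
  ultimately show ?thesis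
    by (simp add: grass_def matrix_transpose_mul P(1) matrix_mul_assoc)
qed

lemma space_eq_grass:
  assumes "sets M = sets (restrict_space borel (grass k :: 'n::finite mat set))"
  shows "space M = grass k"
  using sets_eq_imp_space_eq[OF assms] by (simp add: space_restrict_space)

lemma borel_measurable_grass:
  fixes f :: "'n::finite mat \<Rightarrow> real"
  assumes "sets M = sets (restrict_space borel (grass k :: 'n mat set))" "continuous_on UNIV f"
  shows "f \<in> borel_measurable M"
  using measurable_restrict_space1[OF borel_measurable_continuous_onI[OF assms(2)]]
    measurable_cong_sets[OF assms(1) refl] by blast

lemma continuous_on_matrix_sandwich: "continuous_on UNIV (\<lambda>Q::real^'n^'n. A ** Q ** B)"
  unfolding matrix_matrix_mult_def
  by (intro continuous_on_vec_lambda continuous_on_sum continuous_on_mult continuous_on_const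
        continuous_on_component continuous_on_id)

lemma continuous_on_mat_inner: "continuous_on UNIV (\<lambda>Q. mat_inner P Q)"
  unfolding mat_inner_def matrix_matrix_mult_def trace_def
  by (intro continuous_on_vec_lambda continuous_on_sum continuous_on_mult continuous_on_const
        continuous_on_component continuous_on_id)

lemma Kt_orthogonal_conj: "Kt t (U ** P ** transpose U) Q = Kt t P (transpose U ** Q ** U)"
proof -
  have "trace (U ** P ** transpose U ** Q) = trace (U ** (P ** transpose U ** Q))"
    by (simp add: matrix_mul_assoc)
  also have "\<dots> = trace ((P ** transpose U ** Q) ** U)"
    by (rule trace_mul_sym)
  also have "\<dots> = trace (P ** (transpose U ** Q ** U))"
    by (simp add: matrix_mul_assoc)
  finally show ?thesis
    by (simp add: Kt_def mat_inner_def)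
qed

lemma distr_orthogonal_conj:
  fixes \<sigma> :: "'n::finite mat measure" and U :: "real^'n^'n"
  assumes \<sigma>: "orth_inv_prob k \<sigma>" and U: "orthogonal_matrix U"
  defines "h \<equiv> \<lambda>Q. transpose U ** Q ** U"
  shows "h \<in> measurable \<sigma> \<sigma>" and "distr \<sigma> \<sigma> h = \<sigma>"
proof -
  have sets: "sets \<sigma> = sets (restrict_space borel (grass k))"
    and inv: "\<And>A. A \<in> sets \<sigma> \<Longrightarrow> emeasure \<sigma> ((\<lambda>P. U ** P ** transpose U) ` A) = emeasure \<sigma> A"
    using \<sigma> U unfolding orth_inv_prob_def by blast+
  have sp: "space \<sigma> = grass k"
    by (rule space_eq_grass[OF sets])
  have UU: "transpose U ** U = mat 1" "U ** transpose U = mat 1"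
    using U by (simp_all add: orthogonal_matrix_def)
  define h' where "h' = (\<lambda>Q::real^'n^'n. U ** Q ** transpose U)"
  have "h (h' Q) = (transpose U ** U) ** Q ** (transpose U ** U)"
    and "h' (h Q) = (U ** transpose U) ** Q ** (U ** transpose U)" for Q
    unfolding h_def h'_def by (simp_all only: matrix_mul_assoc)
  then have hh': "h (h' Q) = Q" "h' (h Q) = Q" for Q
    by (simp_all add: UU)
  have "orthogonal_matrix (transpose U)"
    using UU by (simp add: orthogonal_matrix_def)
  then have "h \<in> grass k \<rightarrow> grass k"
    using orthogonal_conj_in_grass unfolding h_def by fastforce
  then have "h \<in> measurable (restrict_space borel (grass k)) (restrict_space borel (grass k))"
    unfolding h_def by (intro measurable_restrict_space3 borel_measurable_continuous_onI
                          continuous_on_matrix_sandwich)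
  then show hm: "h \<in> measurable \<sigma> \<sigma>"
    using measurable_cong_sets[OF sets sets] by blast
  show "distr \<sigma> \<sigma> h = \<sigma>"
  proof (rule measure_eqI)
    fix A assume "A \<in> sets (distr \<sigma> \<sigma> h)"
    then have A: "A \<in> sets \<sigma>" by simp
    then have "A \<subseteq> grass k"
      using sets.sets_into_space sp by blast
    moreover have "h' ` grass k \<subseteq> grass k"
      using U orthogonal_conj_in_grass unfolding h'_def by blast
    ultimately have "h -` A \<inter> space \<sigma> = h' ` A"
      unfolding sp by (force intro: image_eqI[of _ h' "h _"] simp: hh')
    then show "emeasure (distr \<sigma> \<sigma> h) A = emeasure \<sigma> A"
      using inv[OF A] by (simp add: emeasure_distr[OF hm A] h'_def)
  qed simp
qed

lemma integral_Kt_orthogonal_conj: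
  assumes "orth_inv_prob k \<sigma>" "orthogonal_matrix U"
  shows "(\<integral>Q. Kt t (U ** P ** transpose U) Q \<partial>\<sigma>) = (\<integral>Q. Kt t P Q \<partial>\<sigma>)"
proof -
  have "sets \<sigma> = sets (restrict_space borel (grass k))"
    using assms(1) unfolding orth_inv_prob_def by blast
  then have "(\<lambda>Q. Kt t P Q) \<in> borel_measurable \<sigma>"
    unfolding Kt_def by (intro borel_measurable_grass continuous_intros continuous_on_mat_inner)
  then have "(\<integral>Q. Kt t P Q \<partial>distr \<sigma> \<sigma> (\<lambda>Q. transpose U ** Q ** U)) = (\<integral>Q. Kt t P (transpose U ** Q ** U) \<partial>\<sigma>)"
    by (rule integral_distr[OF distr_orthogonal_conj(1)[OF assms]])
  then show ?thesis
    by (simp add: distr_orthogonal_conj(2)[OF assms] Kt_orthogonal_conj)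
qed

lemma integral_Kt_grass_eq:
  assumes "orth_inv_prob k \<sigma>" "P \<in> grass k" "P' \<in> grass k"
  shows "(\<integral>Q. Kt t P' Q \<partial>\<sigma>) = (\<integral>Q. Kt t P Q \<partial>\<sigma>)"
proof -
  obtain U where "orthogonal_matrix U" "U ** P ** transpose U = P'"
    using grass_transitive[OF assms(2,3)] .
  then show ?thesis
    using integral_Kt_orthogonal_conj[OF assms(1)] by metis
qed

section \<open>The feature map of \<open>K\<^sub>t\<close>\<close>

definition feature_idx :: "nat \<Rightarrow> (nat \<Rightarrow> 'n::finite \<times> 'n) set" where
  "feature_idx t = PiE {..<t} (\<lambda>_. UNIV)"

definition feature :: "nat \<Rightarrow> 'n::finite mat \<Rightarrow> (nat \<Rightarrow> 'n \<times> 'n) \<Rightarrow> real" where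
  "feature t P e = (\<Prod>l<t. P $ fst (e l) $ snd (e l))"

lemma finite_feature_idx: "finite (feature_idx t)"
  unfolding feature_idx_def by (intro finite_PiE) auto

lemma symmetric_matrix_entry:
  fixes R :: "'n::finite mat"
  assumes "transpose R = R"
  shows "R $ j $ i = R $ i $ j"
  using arg_cong[OF assms, of "\<lambda>A. A $ i $ j"] by (simp add: transpose_def)

lemma mat_inner_symmetric:
  fixes Q R :: "'n::finite mat"
  assumes "transpose R = R"
  shows "mat_inner Q R = (\<Sum>p\<in>UNIV. Q $ fst p $ snd p * R $ fst p $ snd p)"
proof -
  have "mat_inner Q R = (\<Sum>i\<in>UNIV. \<Sum>j\<in>UNIV. Q $ i $ j * R $ i $ j)"
    by (simp add: mat_inner_def trace_def matrix_matrix_mult_def symmetric_matrix_entry[OF assms])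
  then show ?thesis
    by (simp add: sum.cartesian_product case_prod_beta)
qed

lemma Kt_eq_sum_feature:
  fixes Q R :: "'n::finite mat"
  assumes "transpose R = R"
  shows "Kt t Q R = (\<Sum>e\<in>feature_idx t. feature t Q e * feature t R e)"
proof -
  define g where "g = (\<lambda>p::'n \<times> 'n. Q $ fst p $ snd p * R $ fst p $ snd p)"
  have "Kt t Q R = (\<Prod>l\<in>{..<t}. \<Sum>p\<in>UNIV. g p)"
    by (simp add: Kt_def mat_inner_symmetric[OF assms] g_def)
  also have "\<dots> = (\<Sum>e\<in>PiE {..<t} (\<lambda>_. UNIV). \<Prod>l\<in>{..<t}. g (e l))"
    by (rule prod_sum_PiE) auto
  finally show ?thesis
    by (simp add: feature_idx_def feature_def g_def prod.distrib)
qed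

lemma feature_in_Pol: "(\<lambda>P. feature t P e) \<in> Pol t"
proof -
  define \<alpha> where "\<alpha> = (\<lambda>p. card {l. l \<in> {..<t} \<and> e l = p})"
  have "feature t P e = monomial \<alpha> P" for P
  proof -
    have "feature t P e = (\<Prod>p\<in>UNIV. \<Prod>l\<in>{l. l \<in> {..<t} \<and> e l = p}. P $ fst (e l) $ snd (e l))"
      unfolding feature_def by (rule prod.group[symmetric]) auto
    also have "\<dots> = monomial \<alpha> P"
    proof -
      have "(\<Prod>l\<in>{l. l \<in> {..<t} \<and> e l = p}. P $ fst (e l) $ snd (e l))
          = (\<Prod>l\<in>{l. l \<in> {..<t} \<and> e l = p}. P $ fst p $ snd p)" for p
        by (rule prod.cong) auto
      then show ?thesis
        by (simp add: monomial_def \<alpha>_def)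
    qed
    finally show ?thesis .
  qed
  moreover have "(\<Sum>p\<in>UNIV. \<alpha> p) = t"
    unfolding \<alpha>_def using sum.group[of "{..<t}" UNIV e "\<lambda>_. 1::nat"] by simp
  ultimately show ?thesis
    unfolding Pol_def by (intro CollectI exI[of _ "{\<alpha>}"] exI[of _ "\<lambda>_. 1"]) auto
qed

text \<open>Entries of an orthogonal projection are bounded by its diagonal, which lies in \<open>[0, 1]\<close>.\<close>
lemma abs_grass_entry_le_1:
  fixes P :: "'n::finite mat"
  assumes "P \<in> grass k"
  shows "\<bar>P $ i $ j\<bar> \<le> 1"
proof -
  have diag: "P $ i $ i = (\<Sum>l\<in>UNIV. (P $ i $ l)\<^sup>2)"
  proof -
    have "P $ i $ i = (P ** P) $ i $ i"
      using assms by (simp add: grass_def)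
    also have "\<dots> = (\<Sum>l\<in>UNIV. P $ i $ l * P $ l $ i)"
      by (simp add: matrix_matrix_mult_def)
    also have "\<dots> = (\<Sum>l\<in>UNIV. (P $ i $ l)\<^sup>2)"
      using assms symmetric_matrix_entry[of P]
      by (intro sum.cong refl) (simp add: grass_def power2_eq_square)
    finally show ?thesis .
  qed
  have le: "(P $ i $ l)\<^sup>2 \<le> P $ i $ i" for l
    unfolding diag by (rule member_le_sum) auto
  have "P $ i $ i \<le> 1"
  proof (rule ccontr)
    assume "\<not> P $ i $ i \<le> 1"
    then have "P $ i $ i * 1 < P $ i $ i * P $ i $ i"
      by (intro mult_strict_left_mono) auto
    then show False
      using le[of i] by (simp add: power2_eq_square)
  qed
  then have "(P $ i $ j)\<^sup>2 \<le> 1"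
    using le[of j] by simp
  then show ?thesis
    by (metis abs_le_square_iff abs_one one_power2)
qed

lemma abs_feature_le_1: "P \<in> grass k \<Longrightarrow> \<bar>feature t P e\<bar> \<le> 1"
  unfolding feature_def abs_prod using abs_grass_entry_le_1 by (intro prod_le_1) auto

lemma continuous_on_feature: "continuous_on UNIV (\<lambda>P. feature t P e)"
  unfolding feature_def by (intro continuous_on_prod continuous_on_component continuous_on_id)

lemma sum_Kt_eq_sum_feature:
  assumes "transpose R = R"
  shows "(\<Sum>i<m. c i * Kt t (Q i) R)
           = (\<Sum>e\<in>feature_idx t. (\<Sum>i<m. c i * feature t (Q i) e) * feature t R e)"
  by (simp add: Kt_eq_sum_feature[OF assms] sum_distrib_left sum_distrib_right mult.assoc
        sum.swap[of _ "{..<m}"])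

lemma Kt_commute: "Kt t P Q = Kt t Q P"
  unfolding Kt_def mat_inner_def by (metis trace_mul_sym)

lemma L2_set_sq_feature_weights:
  assumes "\<And>i. i < m \<Longrightarrow> transpose (Q i) = Q i"
  shows "(L2_set (\<lambda>e. \<Sum>i<m. c i * feature t (Q i) e) (feature_idx t))\<^sup>2
           = (\<Sum>i<m. \<Sum>j<m. c i * c j * Kt t (Q i) (Q j))"
proof -
  define w where "w = (\<lambda>e. \<Sum>i<m. c i * feature t (Q i) e)"
  have "(L2_set w (feature_idx t))\<^sup>2 = (\<Sum>e\<in>feature_idx t. w e * (\<Sum>i<m. c i * feature t (Q i) e))"
    by (simp add: L2_set_def sum_nonneg power2_eq_square w_def)
  also have "\<dots> = (\<Sum>e\<in>feature_idx t. \<Sum>i<m. c i * (w e * feature t (Q i) e))"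
    by (simp add: sum_distrib_left mult.left_commute)
  also have "\<dots> = (\<Sum>i<m. c i * (\<Sum>e\<in>feature_idx t. w e * feature t (Q i) e))"
    by (subst sum.swap) (simp add: sum_distrib_left)
  also have "\<dots> = (\<Sum>i<m. c i * (\<Sum>j<m. c j * Kt t (Q j) (Q i)))"
    using assms by (simp add: sum_Kt_eq_sum_feature w_def)
  also have "\<dots> = (\<Sum>i<m. \<Sum>j<m. c i * c j * Kt t (Q i) (Q j))"
    unfolding sum_distrib_left by (intro sum.cong refl) (subst Kt_commute, simp)
  finally show ?thesis
    by (simp add: w_def)
qed

section \<open>Cubature error of random points\<close>

definition feature_mean :: "'n::finite mat measure \<Rightarrow> nat \<Rightarrow> (nat \<Rightarrow> 'n \<times> 'n) \<Rightarrow> real" where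
  "feature_mean \<sigma> t e = (\<integral>P. feature t P e \<partial>\<sigma>)"

lemma integrable_feature:
  assumes "prob_space M" "sets M = sets (restrict_space borel (grass k))"
  shows "integrable M (\<lambda>P. feature t P e)"
proof -
  interpret prob_space M by fact
  show ?thesis
    using abs_feature_le_1 space_eq_grass[OF assms(2)]
    by (intro integrable_const_bound[where B=1] AE_I2 borel_measurable_grass[OF assms(2)]
          continuous_on_feature) auto
qed

lemma integral_Kt_eq_sum_feature_mean:
  assumes "prob_space \<sigma>" "sets \<sigma> = sets (restrict_space borel (grass k))" "P \<in> grass k"
  shows "(\<integral>Q. Kt t P Q \<partial>\<sigma>) = (\<Sum>e\<in>feature_idx t. feature t P e * feature_mean \<sigma> t e)"
proof -
  have "(\<integral>Q. Kt t P Q \<partial>\<sigma>) = (\<integral>Q. (\<Sum>e\<in>feature_idx t. feature t P e * feature t Q e) \<partial>\<sigma>)"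
    using space_eq_grass[OF assms(2)]
    by (intro Bochner_Integration.integral_cong refl) (simp add: Kt_eq_sum_feature grass_def)
  also have "\<dots> = (\<Sum>e\<in>feature_idx t. feature t P e * feature_mean \<sigma> t e)"
    using integrable_feature[OF assms(1,2)] by (simp add: feature_mean_def)
  finally show ?thesis .
qed

lemma lambda_t_eq_integral_Kt:
  assumes "orth_inv_prob k \<sigma>" "P \<in> grass k"
  shows "lambda_t t \<sigma> = (\<integral>Q. Kt t P Q \<partial>\<sigma>)"
proof -
  interpret prob_space \<sigma>
    using assms(1) by (simp add: orth_inv_prob_def)
  have "space \<sigma> = grass k"
    using assms(1) by (intro space_eq_grass) (simp add: orth_inv_prob_def)
  then have "(\<integral>Q. Kt t P' Q \<partial>\<sigma>) = (\<integral>Q. Kt t P Q \<partial>\<sigma>)" if "P' \<in> space \<sigma>" for P'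
    using integral_Kt_grass_eq[OF assms(1,2)] that by simp
  then have "lambda_t t \<sigma> = (\<integral>P'. (\<integral>Q. Kt t P Q \<partial>\<sigma>) \<partial>\<sigma>)"
    unfolding lambda_t_def by (rule Bochner_Integration.integral_cong[OF refl])
  then show ?thesis
    by (simp add: prob_space)
qed

lemma lambda_t_eq_sum_feature_mean_sq:
  assumes "orth_inv_prob k \<sigma>"
  shows "lambda_t t \<sigma> = (\<Sum>e\<in>feature_idx t. (feature_mean \<sigma> t e)\<^sup>2)"
proof -
  have \<sigma>: "prob_space \<sigma>" "sets \<sigma> = sets (restrict_space borel (grass k))"
    using assms by (auto simp: orth_inv_prob_def)
  then have "lambda_t t \<sigma> = (\<integral>P. (\<Sum>e\<in>feature_idx t. feature t P e * feature_mean \<sigma> t e) \<partial>\<sigma>)"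
    unfolding lambda_t_def using space_eq_grass[OF \<sigma>(2)]
    by (intro Bochner_Integration.integral_cong refl) (simp add: integral_Kt_eq_sum_feature_mean)
  also have "\<dots> = (\<Sum>e\<in>feature_idx t. (feature_mean \<sigma> t e)\<^sup>2)"
    using integrable_feature[OF \<sigma>] by (simp add: feature_mean_def power2_eq_square)
  finally show ?thesis .
qed

text \<open>This is where the orthogonal invariance of \<open>\<sigma>\<close> enters.\<close>
lemma L2_set_centred_feature:
  assumes "orth_inv_prob k \<sigma>" "P \<in> grass k"
  shows "(L2_set (\<lambda>e. feature t P e - feature_mean \<sigma> t e) (feature_idx t))\<^sup>2 = real k ^ t - lambda_t t \<sigma>"
proof -
  have \<sigma>: "prob_space \<sigma>" "sets \<sigma> = sets (restrict_space borel (grass k))"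
    using assms by (auto simp: orth_inv_prob_def)
  have "(\<Sum>e\<in>feature_idx t. (feature t P e)\<^sup>2) = Kt t P P"
    using assms(2) by (simp add: Kt_eq_sum_feature grass_def power2_eq_square)
  also have "\<dots> = real k ^ t"
    using assms(2) by (simp add: Kt_def mat_inner_def grass_def)
  finally have diag: "(\<Sum>e\<in>feature_idx t. (feature t P e)\<^sup>2) = real k ^ t" .
  have cross: "(\<Sum>e\<in>feature_idx t. feature t P e * feature_mean \<sigma> t e) = lambda_t t \<sigma>"
    using assms by (simp add: lambda_t_eq_integral_Kt integral_Kt_eq_sum_feature_mean[OF \<sigma>])
  have "(L2_set (\<lambda>e. feature t P e - feature_mean \<sigma> t e) (feature_idx t))\<^sup>2
      = (\<Sum>e\<in>feature_idx t. (feature t P e - feature_mean \<sigma> t e)\<^sup>2)"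
    by (simp add: L2_set_def sum_nonneg)
  also have "\<dots> = (\<Sum>e\<in>feature_idx t. (feature t P e)\<^sup>2) - 2 * (\<Sum>e\<in>feature_idx t. feature t P e * feature_mean \<sigma> t e)
        + (\<Sum>e\<in>feature_idx t. (feature_mean \<sigma> t e)\<^sup>2)"
    by (simp add: power2_diff sum.distrib sum_subtractf sum_distrib_left mult_ac)
  finally show ?thesis
    using assms(1) by (simp add: diag cross lambda_t_eq_sum_feature_mean_sq)
qed

lemma lambda_t_bounds:
  fixes \<sigma> :: "'n::finite mat measure"
  assumes "orth_inv_prob k \<sigma>"
  shows "0 \<le> lambda_t t \<sigma>" "lambda_t t \<sigma> \<le> real k ^ t"
proof -
  show "0 \<le> lambda_t t \<sigma>"
    using assms by (simp add: lambda_t_eq_sum_feature_mean_sq sum_nonneg)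
  have "space \<sigma> \<noteq> {}" "space \<sigma> = grass k"
    using assms prob_space.not_empty space_eq_grass unfolding orth_inv_prob_def by blast+
  then obtain P :: "'n mat" where "P \<in> grass k"
    by blast
  then show "lambda_t t \<sigma> \<le> real k ^ t"
    using L2_set_centred_feature[OF assms, of P t] by (metis diff_ge_0_iff_ge zero_le_power2)
qed

lemma centred_feature_cubature:
  assumes "orth_inv_prob k \<sigma>" "prob_cubature k t \<sigma> \<nu>"
  shows "integrable \<nu> (\<lambda>P. feature t P e - feature_mean \<sigma> t e)"
    and "(\<integral>P. feature t P e - feature_mean \<sigma> t e \<partial>\<nu>) = 0"
proof -
  have \<nu>: "prob_space \<nu>" "sets \<nu> = sets (restrict_space borel (grass k))"
    using assms(2) by (auto simp: prob_cubature_def)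
  interpret prob_space \<nu> by (fact \<nu>(1))
  show "integrable \<nu> (\<lambda>P. feature t P e - feature_mean \<sigma> t e)"
    using integrable_feature[OF \<nu>] by simp
  have "(\<integral>P. feature t P e \<partial>\<nu>) = feature_mean \<sigma> t e"
    using assms(2) feature_in_Pol[of t e] unfolding prob_cubature_def feature_mean_def by blast
  then show "(\<integral>P. feature t P e - feature_mean \<sigma> t e \<partial>\<nu>) = 0"
    using integrable_feature[OF \<nu>] by (simp add: prob_space)
qed

lemma approx_cubature_mono:
  "approx_cubature k t \<sigma> n P \<omega> \<epsilon> \<Longrightarrow> \<epsilon> \<le> \<epsilon>' \<Longrightarrow> approx_cubature k t \<sigma> n P \<omega> \<epsilon>'"
  unfolding approx_cubature_def by (blast intro: order_trans)

text \<open>The Riesz representer of the cubature error is the mean of the centred feature vectors.\<close>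
lemma approx_cubature_centred_feature:
  fixes \<sigma> :: "'n::finite mat measure" and P :: "nat \<Rightarrow> 'n mat"
  assumes "prob_space \<sigma>" "sets \<sigma> = sets (restrict_space borel (grass k))" "n > 0"
    and "\<And>j. j < n \<Longrightarrow> P j \<in> grass k"
  shows "approx_cubature k t \<sigma> n P (\<lambda>_. 1 / real n)
           (L2_set (\<lambda>e. \<Sum>j<n. feature t (P j) e - feature_mean \<sigma> t e) (feature_idx t) / real n)"
  unfolding approx_cubature_def
proof (intro ballI allI impI)
  fix f m and Q :: "nat \<Rightarrow> 'n mat" and c :: "nat \<Rightarrow> real"
  assume Q: "\<forall>i<m. Q i \<in> grass k"
    and f: "\<forall>R\<in>grass k. f R = (\<Sum>i<m. c i * Kt t (Q i) R)"
    and norm: "(\<Sum>i<m. \<Sum>j<m. c i * c j * Kt t (Q i) (Q j)) = 1"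
  define I where "I = (feature_idx t :: (nat \<Rightarrow> 'n \<times> 'n) set)"
  define w where "w = (\<lambda>e. \<Sum>i<m. c i * feature t (Q i) e)"
  define S where "S = (\<lambda>e. \<Sum>j<n. feature t (P j) e - feature_mean \<sigma> t e)"
  have fR: "f R = (\<Sum>e\<in>I. w e * feature t R e)" if "R \<in> grass k" for R
    using f that by (simp add: sum_Kt_eq_sum_feature grass_def w_def I_def)
  have "(L2_set w I)\<^sup>2 = 1"
    using Q norm by (simp add: L2_set_sq_feature_weights grass_def w_def I_def)
  then have w: "L2_set w I = 1"
    using L2_set_nonneg[of w I] by (auto simp: power2_eq_1_iff)
  have "(\<integral>R. f R \<partial>\<sigma>) = (\<integral>R. (\<Sum>e\<in>I. w e * feature t R e) \<partial>\<sigma>)"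
    using space_eq_grass[OF assms(2)] by (intro Bochner_Integration.integral_cong refl) (simp add: fR)
  also have "\<dots> = (\<Sum>e\<in>I. w e * feature_mean \<sigma> t e)"
    using integrable_feature[OF assms(1,2)] by (simp add: feature_mean_def)
  finally have int_f: "(\<integral>R. f R \<partial>\<sigma>) = (\<Sum>e\<in>I. w e * feature_mean \<sigma> t e)" .
  have "(\<Sum>e\<in>I. w e * S e) = (\<Sum>j<n. \<Sum>e\<in>I. w e * feature t (P j) e) - real n * (\<Sum>e\<in>I. w e * feature_mean \<sigma> t e)"
    unfolding S_def
    by (simp add: sum_subtractf sum_distrib_left right_diff_distrib mult_ac sum.swap[of _ I])
  then have "(\<Sum>j<n. 1 / real n * f (P j)) - (\<integral>R. f R \<partial>\<sigma>) = (\<Sum>e\<in>I. w e * S e) / real n"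
    using assms(3,4) by (simp add: fR int_f sum_divide_distrib[symmetric] field_simps)
  moreover have "\<bar>\<Sum>e\<in>I. w e * S e\<bar> \<le> L2_set S I"
    using abs_sum_mult_le_L2_set[of w S I] by (simp add: w)
  ultimately show "\<bar>(\<Sum>j<n. 1 / real n * f (P j)) - (\<integral>R. f R \<partial>\<sigma>)\<bar>
      \<le> L2_set (\<lambda>e. \<Sum>j<n. feature t (P j) e - feature_mean \<sigma> t e) (feature_idx t) / real n"
    using assms(3) by (simp add: S_def I_def divide_right_mono)
qed

lemma centred_feature_deviation_bound:
  fixes \<sigma> \<nu> :: "'n::finite mat measure" and k t n :: nat and \<tau> :: real
  assumes "1 \<le> k" "1 \<le> n" "\<tau> > 0" "orth_inv_prob k \<sigma>" "prob_cubature k t \<sigma> \<nu>"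
  defines "lam \<equiv> lambda_t t \<sigma>" and "M \<equiv> PiM {..<n} (\<lambda>_. \<nu>)"
    and "\<epsilon> \<equiv> sqrt (((1 + \<tau>^2) * real k ^ t - lambda_t t \<sigma>) / real n)"
  shows "{Ps\<in>space M. real n * \<epsilon> \<le> L2_set (\<lambda>e. \<Sum>j<n. feature t (Ps j) e - feature_mean \<sigma> t e) (feature_idx t)}
           \<in> sets M"
    and "measure M {Ps\<in>space M.
           real n * \<epsilon> \<le> L2_set (\<lambda>e. \<Sum>j<n. feature t (Ps j) e - feature_mean \<sigma> t e) (feature_idx t)}
         \<le> 2 * exp (- ((\<tau>^2 / 2) / ((1 - lam / real k ^ t) + \<tau> / (3 * sqrt (real n)))))"
proof -
  define K where "K = real k ^ t"
  define X where "X = (\<lambda>P e. feature t P e - feature_mean \<sigma> t e)"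
  have \<nu>: "prob_space \<nu>" "sets \<nu> = sets (restrict_space borel (grass k))"
    using assms(5) by (auto simp: prob_cubature_def)
  have K: "K > 0" "0 \<le> K - lam" "K - lam \<le> K" "1 - lam / real k ^ t = (K - lam) / K"
    using assms(1) lambda_t_bounds[OF assms(4)] by (auto simp: K_def lam_def field_simps)
  have bnd: "(L2_set (X P) (feature_idx t))\<^sup>2 \<le> K - lam" if "P \<in> space \<nu>" for P
    using L2_set_centred_feature[OF assms(4)] that space_eq_grass[OF \<nu>(2)]
    by (simp add: X_def K_def lam_def)
  have int: "integrable \<nu> (\<lambda>P. X P e)" and mean: "(\<integral>P. X P e \<partial>\<nu>) = 0" for e
    unfolding X_def using centred_feature_cubature[OF assms(4,5)] by auto
  have eps: "sqrt ((K - lam + \<tau>\<^sup>2 * K) / real n) = \<epsilon>"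
    by (simp add: \<epsilon>_def K_def lam_def algebra_simps)
  have "n > 0"
    using assms(2) by simp
  note dev = L2_set_sum_deviation_bound[where X = X and n = n and V = "K - lam",
      OF \<nu>(1) finite_feature_idx this assms(3) K(2,3,1) int bnd mean, folded M_def, unfolded eps X_def]
  show "{Ps\<in>space M. real n * \<epsilon> \<le> L2_set (\<lambda>e. \<Sum>j<n. feature t (Ps j) e - feature_mean \<sigma> t e) (feature_idx t)}
           \<in> sets M"
    by (rule dev(1)) simp
  show "measure M {Ps\<in>space M.
           real n * \<epsilon> \<le> L2_set (\<lambda>e. \<Sum>j<n. feature t (Ps j) e - feature_mean \<sigma> t e) (feature_idx t)}
         \<le> 2 * exp (- ((\<tau>^2 / 2) / ((1 - lam / real k ^ t) + \<tau> / (3 * sqrt (real n)))))"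
    unfolding K(4) by (rule dev(2)) simp
qed

lemma random_points_approx_cubature:
  fixes \<sigma> \<nu> :: "'n::finite mat measure" and k t n :: nat and \<tau> :: real
  assumes "1 \<le> k" "1 \<le> n" "\<tau> > 0" "orth_inv_prob k \<sigma>" "prob_cubature k t \<sigma> \<nu>"
  defines "lam \<equiv> lambda_t t \<sigma>" and "M \<equiv> PiM {..<n} (\<lambda>_. \<nu>)"
  shows "\<exists>E\<in>sets M.
           E \<subseteq> {Ps \<in> space M. approx_cubature k t \<sigma> n Ps (\<lambda>_. 1 / real n)
                   (sqrt (((1 + \<tau>^2) * real k ^ t - lam) / real n))} \<and>
           measure M E \<ge> 1 - 2 * exp (- ((\<tau>^2 / 2) / ((1 - lam / real k ^ t) + \<tau> / (3 * sqrt (real n)))))"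
proof -
  define \<epsilon> where "\<epsilon> = sqrt (((1 + \<tau>^2) * real k ^ t - lam) / real n)"
  let ?Bad = "{Ps\<in>space M.
    real n * \<epsilon> \<le> L2_set (\<lambda>e. \<Sum>j<n. feature t (Ps j) e - feature_mean \<sigma> t e) (feature_idx t)}"
  have Bad: "?Bad \<in> sets M"
    "measure M ?Bad \<le> 2 * exp (- ((\<tau>^2 / 2) / ((1 - lam / real k ^ t) + \<tau> / (3 * sqrt (real n)))))"
    unfolding \<epsilon>_def lam_def M_def
    by (fact centred_feature_deviation_bound(1)[OF assms(1-5)])
       (fact centred_feature_deviation_bound(2)[OF assms(1-5)])
  have \<sigma>: "prob_space \<sigma>" "sets \<sigma> = sets (restrict_space borel (grass k))"
    using assms(4) by (auto simp: orth_inv_prob_def)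
  have \<nu>: "prob_space \<nu>" "sets \<nu> = sets (restrict_space borel (grass k))"
    using assms(5) by (auto simp: prob_cubature_def)
  interpret M: prob_space M
    unfolding M_def using \<nu>(1) by (intro prob_space_PiM) auto
  have "space M - ?Bad \<subseteq> {Ps \<in> space M. approx_cubature k t \<sigma> n Ps (\<lambda>_. 1 / real n) \<epsilon>}"
  proof
    fix Ps assume "Ps \<in> space M - ?Bad"
    then have Ps: "Ps \<in> space M"
      "L2_set (\<lambda>e. \<Sum>j<n. feature t (Ps j) e - feature_mean \<sigma> t e) (feature_idx t) < real n * \<epsilon>"
      by auto
    then have "\<And>j. j < n \<Longrightarrow> Ps j \<in> grass k"
      using space_eq_grass[OF \<nu>(2)] by (auto simp: M_def space_PiM)
    then have "approx_cubature k t \<sigma> n Ps (\<lambda>_. 1 / real n)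
      (L2_set (\<lambda>e. \<Sum>j<n. feature t (Ps j) e - feature_mean \<sigma> t e) (feature_idx t) / real n)"
      using assms(2) by (intro approx_cubature_centred_feature[OF \<sigma>]) auto
    moreover have "L2_set (\<lambda>e. \<Sum>j<n. feature t (Ps j) e - feature_mean \<sigma> t e) (feature_idx t) / real n \<le> \<epsilon>"
      using Ps assms(2) by (simp add: pos_divide_le_eq mult.commute)
    ultimately show "Ps \<in> {Ps \<in> space M. approx_cubature k t \<sigma> n Ps (\<lambda>_. 1 / real n) \<epsilon>}"
      using Ps(1) approx_cubature_mono by blast
  qed
  moreover have "measure M (space M - ?Bad) = 1 - measure M ?Bad"
    by (rule M.prob_compl[OF Bad(1)])
  ultimately have "space M - ?Bad \<in> sets M \<and>
      space M - ?Bad \<subseteq> {Ps \<in> space M. approx_cubature k t \<sigma> n Ps (\<lambda>_. 1 / real n) \<epsilon>} \<and>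
      measure M (space M - ?Bad)
        \<ge> 1 - 2 * exp (- ((\<tau>^2 / 2) / ((1 - lam / real k ^ t) + \<tau> / (3 * sqrt (real n)))))"
    using Bad by auto
  then show ?thesis
    unfolding \<epsilon>_def by blast
qed

theorem corollary5p4:
  fixes \<sigma> \<nu> :: "'n::finite mat measure" and k t n :: nat and \<tau> :: real
  assumes "1 \<le> k" and "k < CARD('n)" and "1 \<le> n" and "\<tau> > 0"
    and "orth_inv_prob k \<sigma>"
    and "prob_cubature k t \<sigma> \<nu>"
  defines "lam \<equiv> lambda_t t \<sigma>"
  defines "\<Psi> \<equiv> (\<tau>^2 / 2) / ((1 - lam / real k ^ t) + \<tau> / (3 * sqrt (real n)))"
  defines "r \<equiv> 1 + 6 / (real n * \<tau>^2 *
                 (ln (1 + \<tau> / (sqrt (real n) * (1 - lam / real k ^ t))))^2)"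
  defines "M \<equiv> PiM {..<n} (\<lambda>_. \<nu>)"
  shows "\<exists>E\<in>sets M.
           E \<subseteq> {Ps \<in> space M. approx_cubature k t \<sigma> n Ps (\<lambda>_. 1 / real n)
                   (sqrt (((1 + \<tau>^2) * real k ^ t - lam) / real n))} \<and>
           measure M E \<ge> 1 - 4 * exp (- \<Psi>) * r"
proof -
  obtain E where E: "E \<in> sets M" "E \<subseteq> {Ps \<in> space M. approx_cubature k t \<sigma> n Ps (\<lambda>_. 1 / real n)
                   (sqrt (((1 + \<tau>^2) * real k ^ t - lam) / real n))}" "measure M E \<ge> 1 - 2 * exp (- \<Psi>)"
    using random_points_approx_cubature[OF assms(1,3,4,5,6)] unfolding \<Psi>_def lam_def M_def by blast
  have "r \<ge> 1"
    by (simp add: r_def zero_le_mult_iff)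
  then have "4 * exp (- \<Psi>) * 1 \<le> 4 * exp (- \<Psi>) * r"
    by (intro mult_left_mono) auto
  then have "measure M E \<ge> 1 - 4 * exp (- \<Psi>) * r"
    using E(3) exp_ge_zero[of "- \<Psi>"] by linarith
  with E(1,2) show ?thesis
    by blast
qed

end
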